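(* For every $q\in X^*\setminus\{e\}$, the star root $\sqrt[*]{P_q}$ is a suffix code, i.e. no word of $\sqrt[*]{P_q}$ is a proper suffix of another word of $\sqrt[*]{P_q}$.
   Context: $X$ is a finite alphabet; $X^*$ the finite words (empty word $e$); $w\sqsubseteq\eta$ means $w$ is a prefix of $\eta$, $w\sqsubset\eta$ a proper prefix. $P_q:=\{v: e\sqsubset v\sqsubseteq q\sqsubset v\cdot q\}$. The star root of $P_q$ is $\sqrt[*]{P_q}:=P_q\setminus(P_q^2\cdot P_q^* )$, i.e. the elements of $P_q$ that are not a concatenation of two or more elements of $P_q$. *)

theory Defs
  imports Main "HOL-Library.Sublist"
begin

definition P :: "'a list \<Rightarrow> 'a list set" where
  "P q = {v. [] \<noteq> v \<and> prefix v q \<and> strict_prefix q (v @ q)}"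

text \<open>Concatenations of two or more elements of A, i.e. A^2 A^*.\<close>
definition concat2 :: "'a list set \<Rightarrow> 'a list set" where
  "concat2 A = {concat ws | ws. 2 \<le> length ws \<and> set ws \<subseteq> A}"

definition star_root :: "'a list set \<Rightarrow> 'a list set" where
  "star_root A = A - concat2 A"

end

theory Submission
  imports Defs
begin

(*
  The set P q is closed under left quotients by its own elements:
  if u and x u both lie in P q and x is nonempty, then x lies in P q.
  Indeed x is a prefix of x u, hence of q; and from u q = q t (because u is
  in P q) we get that q is a prefix of x u q = x q t, and since q is no
  longer than x q, it is already a prefix of x q.

  Consequently, if u were a proper suffix of v = x u with u, v in the star
  root, then v = x u would be a product of two elements of P q, i.e. an
  element of (P q)^2 (P q)^*, contradicting that v belongs to the star root.
*)

text \<open>For nonempty v, the strictness in the definition of P q is automatic.\<close>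
lemma P_iff:
  "v \<in> P q \<longleftrightarrow> v \<noteq> [] \<and> prefix v q \<and> prefix q (v @ q)"
  unfolding P_def strict_prefix_def by auto

lemma append_in_concat2:
  assumes "x \<in> A" and "u \<in> A"
  shows "x @ u \<in> concat2 A"
  unfolding concat2_def
proof (intro CollectI exI conjI)
  show "x @ u = concat [x, u]" by simp
qed (use assms in auto)

lemma P_left_quotient:
  assumes u: "u \<in> P q" and xu: "x @ u \<in> P q" and x: "x \<noteq> []"
  shows "x \<in> P q"
proof -
  obtain t where t: "u @ q = q @ t"
    using u unfolding P_iff prefix_def by auto
  have "prefix q (x @ u @ q)"
    using xu unfolding P_iff by simp
  then have q_pref_long: "prefix q (x @ q @ t)"
    using t by simp
  have "prefix (x @ q) (x @ q @ t)" by simp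
  then have "prefix q (x @ q)"
    using prefix_length_prefix[OF q_pref_long] by simp
  moreover have "prefix x q"
    using xu unfolding P_iff by (meson prefix_order.trans prefixI)
  ultimately show ?thesis
    using x unfolding P_iff by simp
qed

theorem corollary5:
  fixes q :: "'a::finite list"
  assumes "q \<noteq> []"
  shows "\<forall>u \<in> star_root (P q). \<forall>v \<in> star_root (P q). \<not> strict_suffix u v"
proof (intro ballI notI)
  fix u v
  assume u: "u \<in> star_root (P q)" and v: "v \<in> star_root (P q)"
    and suffix_uv: "strict_suffix u v"
  then obtain x where v_eq: "v = x @ u" and x: "x \<noteq> []"
    unfolding strict_suffix_def suffix_def by auto
  have uP: "u \<in> P q" and vP: "x @ u \<in> P q"
    using u v v_eq unfolding star_root_def by auto
  have "x \<in> P q"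
    using P_left_quotient[OF uP vP x] .
  then have "v \<in> concat2 (P q)"
    using append_in_concat2 uP v_eq by blast
  then show False
    using v unfolding star_root_def by blast
qed

end
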